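(* For every $n \geq 2$ and every $i \in \{1,\ldots,n\}$, if the set of arrangements in $\{d_{n1}\}$ with first entry $i$ is nonempty, then it has exactly $Der_{n-2}$ elements.
   Context: A linear arrangement of $\{1,\ldots,n\}$ is a sequence $a_1\cdots a_n$ in which each of $1,\ldots,n$ appears exactly once. It contains the pattern $ij$ if $a_t=i$ and $a_{t+1}=j$ for some $t$; otherwise it avoids it. $\{d_{n1}\}$ is the set of linear arrangements of $\{1,\ldots,n\}$ that avoid all of the patterns $12, 23, \ldots, (n-1)n$ and contain the pattern $n1$. $Der_m$ is the number of permutations of $\{1,\ldots,m\}$ with no fixed point ($Der_0=1$). *)

theory Defs
  imports "HOL-Combinatorics.Permutations"
begin

definition linear_arrangement :: "nat \<Rightarrow> nat list \<Rightarrow> bool" where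
  "linear_arrangement n xs \<longleftrightarrow> distinct xs \<and> set xs = {1..n}"

definition contains_pattern :: "nat list \<Rightarrow> nat \<Rightarrow> nat \<Rightarrow> bool" where
  "contains_pattern xs i j \<longleftrightarrow> (\<exists>t. Suc t < length xs \<and> xs ! t = i \<and> xs ! Suc t = j)"

definition d_n1 :: "nat \<Rightarrow> nat list set" where
  "d_n1 n = {xs. linear_arrangement n xs
                 \<and> (\<forall>k\<in>{1..<n}. \<not> contains_pattern xs k (Suc k))
                 \<and> contains_pattern xs n 1}"

definition Der :: "nat \<Rightarrow> nat" where
  "Der m = card {p. p permutes {1..m} \<and> (\<forall>x\<in>{1..m}. p x \<noteq> x)}"

end

theory Submission
  imports Defs
begin

text \<open>In an arrangement of \<open>d\<^sub>n\<^sub>1\<close> the entry \<open>n\<close> is immediately followed by \<open>1\<close>.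
  Deleting \<open>n\<close> leaves an arrangement of \<open>{1..n-1}\<close> without successions \<open>k, k+1\<close> and,
  since the predecessor of \<open>n\<close> was not \<open>n-1\<close>, without the cyclic succession \<open>n-1, 1\<close>;
  conversely \<open>n\<close> can always be reinserted in front of \<open>1\<close>. A cyclic relabelling that sends
  the first entry (\<open>i\<close>, or \<open>1\<close> if \<open>i = n\<close>) to \<open>0\<close> turns these into the arrangements of
  \<open>{0..n-2}\<close> that begin with \<open>0\<close> and contain no succession \<open>a, a+1\<close>.

  Their numbers \<open>s\<^sub>k\<close> satisfy the derangement recurrence
  \<open>s\<^sub>k\<^sub>+\<^sub>2 = (k+1) (s\<^sub>k\<^sub>+\<^sub>1 + s\<^sub>k)\<close>: in such an arrangement of \<open>{0..k+2}\<close> the maximum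
  follows some \<open>a \<le> k\<close>. Deleting the maximum leaves an arrangement counted by \<open>s\<^sub>k\<^sub>+\<^sub>1\<close>,
  unless \<open>a+1\<close> comes right after the maximum; then deleting \<open>a+1\<close> as well and closing the gap
  in the values leaves one counted by \<open>s\<^sub>k\<close>.\<close>

section \<open>Adjacent pairs of a list\<close>

definition adjacencies :: "'a list \<Rightarrow> ('a \<times> 'a) set" where
  "adjacencies xs = set (zip xs (tl xs))"

lemma adjacencies_Nil [simp]: "adjacencies [] = {}"
  by (simp add: adjacencies_def)

lemma adjacencies_singleton [simp]: "adjacencies [x] = {}"
  by (simp add: adjacencies_def)

lemma adjacencies_Cons:
  "adjacencies (x # xs) = (if xs = [] then {} else insert (x, hd xs) (adjacencies xs))"
  by (cases xs) (auto simp: adjacencies_def)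

lemma adjacencies_Cons_Cons [simp]:
  "adjacencies (x # y # ys) = insert (x, y) (adjacencies (y # ys))"
  by (simp add: adjacencies_def)

lemma adjacencies_append:
  "adjacencies (us @ vs) =
     adjacencies us \<union> adjacencies vs \<union> (if us = [] \<or> vs = [] then {} else {(last us, hd vs)})"
proof (induction us)
  case (Cons u us)
  then show ?case by (cases us; cases vs) auto
qed simp

lemma adjacencies_map: "adjacencies (map f xs) = map_prod f f ` adjacencies xs"
  by (induction xs rule: induct_list012) auto

lemma in_adjacencies_conv_nth:
  "(a, b) \<in> adjacencies xs \<longleftrightarrow> (\<exists>t. Suc t < length xs \<and> xs ! t = a \<and> xs ! Suc t = b)"
  by (auto simp: adjacencies_def set_zip nth_tl less_diff_conv)

lemma contains_pattern_iff_adjacencies: "contains_pattern xs i j \<longleftrightarrow> (i, j) \<in> adjacencies xs"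
  by (simp add: contains_pattern_def in_adjacencies_conv_nth)

lemma in_adjacencies_split: "(a, b) \<in> adjacencies xs \<Longrightarrow> \<exists>us vs. xs = us @ a # b # vs"
proof (induction xs rule: induct_list012)
  case (3 x y zs)
  show ?case
  proof (cases "(a, b) = (x, y)")
    case True
    then show ?thesis by (intro exI[of _ "[]"] exI[of _ zs]) simp
  next
    case False
    with "3.prems" "3.IH"(2) obtain us vs where "y # zs = us @ a # b # vs" by auto
    then have "x # y # zs = (x # us) @ a # b # vs" by simp
    then show ?thesis by (rule exI[of _ "x # us", OF exI])
  qed
qed simp_all

lemma in_adjacencies_setD: "(a, b) \<in> adjacencies xs \<Longrightarrow> a \<in> set xs \<and> b \<in> set xs"
  by (auto dest: in_adjacencies_split)

lemma adjacent_neq: "distinct xs \<Longrightarrow> (a, b) \<in> adjacencies xs \<Longrightarrow> a \<noteq> b"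
  by (auto simp: in_adjacencies_conv_nth nth_eq_iff_index_eq)

lemma adjacent_neq_hd: "distinct xs \<Longrightarrow> (a, b) \<in> adjacencies xs \<Longrightarrow> b \<noteq> hd xs"
  by (cases xs) (auto simp: in_adjacencies_conv_nth nth_eq_iff_index_eq hd_conv_nth)

lemma adjacent_pred_unique:
  "distinct xs \<Longrightarrow> (a, b) \<in> adjacencies xs \<Longrightarrow> (a', b) \<in> adjacencies xs \<Longrightarrow> a = a'"
  by (auto simp: in_adjacencies_conv_nth nth_eq_iff_index_eq)

lemma adjacent_succ_unique:
  "distinct xs \<Longrightarrow> (a, b) \<in> adjacencies xs \<Longrightarrow> (a, b') \<in> adjacencies xs \<Longrightarrow> b = b'"
  by (auto simp: in_adjacencies_conv_nth nth_eq_iff_index_eq)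

lemma adjacencies_delete_infix:
  "(u, v) \<in> adjacencies (us @ ws) \<Longrightarrow>
     (u, v) \<in> adjacencies (us @ vs @ ws) \<or> (us \<noteq> [] \<and> ws \<noteq> [] \<and> u = last us \<and> v = hd ws)"
  by (auto simp: adjacencies_append split: if_splits)

lemma adjacencies_insert_infix:
  "(u, v) \<in> adjacencies (us @ vs @ ws) \<Longrightarrow>
     (u, v) \<in> adjacencies (us @ ws) \<or> (u, v) \<in> adjacencies vs \<or>
     (us \<noteq> [] \<and> vs \<noteq> [] \<and> u = last us \<and> v = hd vs) \<or>
     (vs \<noteq> [] \<and> ws \<noteq> [] \<and> u = last vs \<and> v = hd ws)"
  by (auto simp: adjacencies_append split: if_splits)

definition replace_elem :: "'a \<Rightarrow> 'a list \<Rightarrow> 'a list \<Rightarrow> 'a list" where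
  "replace_elem a ys xs = concat (map (\<lambda>x. if x = a then ys else [x]) xs)"

lemma replace_elem_append_Cons:
  assumes "a \<notin> set us" "a \<notin> set vs"
  shows "replace_elem a ys (us @ a # vs) = us @ ys @ vs"
proof -
  have "replace_elem a ys xs = xs" if "a \<notin> set xs" for xs
    using that by (induction xs) (auto simp: replace_elem_def)
  then show ?thesis
    using assms by (simp add: replace_elem_def)
qed

lemma distinct_split_elem:
  "distinct xs \<Longrightarrow> a \<in> set xs \<Longrightarrow> \<exists>us vs. xs = us @ a # vs \<and> a \<notin> set us \<and> a \<notin> set vs"
  using split_list[of a xs] by fastforce

section \<open>Derangements\<close>

definition derangements :: "'a set \<Rightarrow> ('a \<Rightarrow> 'a) set" where
  "derangements A = {p. p permutes A \<and> (\<forall>x\<in>A. p x \<noteq> x)}"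

lemma Der_eq_card_derangements: "Der m = card (derangements {1..m})"
  by (simp add: Der_def derangements_def)

lemma finite_derangements: "finite A \<Longrightarrow> finite (derangements A)"
  unfolding derangements_def by (rule finite_subset[OF _ finite_permutations]) auto

lemma card_derangements: "finite A \<Longrightarrow> card (derangements A) = Der (card A)"
proof -
  assume "finite A"
  then obtain h where "bij_betw h {1..card A} A"
    using ex_bij_betw_nat_finite_1 by blast
  then have "card (derangements {1..card A}) = card (derangements A)"
    unfolding derangements_def by (rule bij_betw_same_card[OF bij_betw_derangements])
  then show ?thesis by (simp add: Der_eq_card_derangements)
qed

lemma Der_0: "Der 0 = 1"
proof -
  have "derangements {1..0::nat} = {id}" by (simp add: derangements_def permutes_empty)
  then show ?thesis by (simp add: Der_eq_card_derangements)
qed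

lemma Der_1: "Der 1 = 0"
proof -
  have "derangements {1..1::nat} = {}" by (simp add: derangements_def permutes_sing)
  then show ?thesis by (simp add: Der_eq_card_derangements)
qed

text \<open>Composing a derangement \<open>p\<close> of \<open>insert N B\<close> with the transposition of \<open>N\<close> and \<open>p N\<close>
  gives a permutation of \<open>B\<close> whose only possible fixed point is \<open>p N\<close>.\<close>

lemma transpose_comp_in_derangements_insert:
  assumes N: "N \<notin> B" and a: "a \<in> B" and q: "q \<in> derangements B \<union> derangements (B - {a})"
  shows "transpose a N \<circ> q \<in> derangements (insert N B)"
proof -
  have qB: "q permutes B" and q_moves: "\<And>x. x \<in> B \<Longrightarrow> x \<noteq> a \<Longrightarrow> q x \<noteq> x"
    using q by (auto simp: derangements_def intro: permutes_subset)
  have "transpose a N \<circ> q permutes insert N B"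
    using a by (intro permutes_compose permutes_swap_id permutes_subset[OF qB]) auto
  moreover have "(transpose a N \<circ> q) x \<noteq> x" if "x \<in> insert N B" for x
    using that a N q_moves permutes_not_in[OF qB N] permutes_in_image[OF qB, of x]
    by (auto simp: transpose_def)
  ultimately show ?thesis by (simp add: derangements_def)
qed

lemma derangements_insert_decompose:
  assumes N: "N \<notin> B" and p: "p \<in> derangements (insert N B)"
  shows "p N \<in> B" and "transpose (p N) N \<circ> p \<in> derangements B \<union> derangements (B - {p N})"
proof -
  have pA: "p permutes insert N B" and p_moves: "\<And>x. x \<in> insert N B \<Longrightarrow> p x \<noteq> x"
    using p by (auto simp: derangements_def)
  show a: "p N \<in> B"
    using permutes_in_image[OF pA, of N] p_moves[of N] by auto
  define q where "q = transpose (p N) N \<circ> p"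
  have "q permutes insert N B"
    unfolding q_def using a by (intro permutes_compose[OF pA] permutes_swap_id) auto
  moreover have "q N = N" by (simp add: q_def)
  ultimately have qB: "q permutes B"
    by (metis permutes_superset Diff_iff insertE)
  have "q x \<noteq> x" if "x \<in> B" "x \<noteq> p N" for x
  proof -
    have "p x \<noteq> p N" using permutes_inj[OF pA] that N by (metis injD)
    then show ?thesis
      using that p_moves[of x] by (auto simp: q_def transpose_def)
  qed
  moreover have "q permutes B - {p N}" if "q (p N) = p N"
    using that by (intro permutes_superset[OF qB]) auto
  ultimately show "q \<in> derangements B \<union> derangements (B - {p N})"
    using qB by (auto simp: derangements_def)
qed

lemma derangements_insert_eq_image:
  assumes "N \<notin> B"
  shows "derangements (insert N B) =
           (\<lambda>(a, q). transpose a N \<circ> q) ` (SIGMA a:B. derangements B \<union> derangements (B - {a}))"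
proof
  show "derangements (insert N B) \<subseteq>
          (\<lambda>(a, q). transpose a N \<circ> q) ` (SIGMA a:B. derangements B \<union> derangements (B - {a}))"
  proof
    fix p assume p: "p \<in> derangements (insert N B)"
    have eq: "p = transpose (p N) N \<circ> (transpose (p N) N \<circ> p)"
      by (simp add: fun_eq_iff)
    have "(p N, transpose (p N) N \<circ> p) \<in> (SIGMA a:B. derangements B \<union> derangements (B - {a}))"
      using derangements_insert_decompose[OF assms p] by blast
    from rev_image_eqI[OF this, of p "\<lambda>(a, q). transpose a N \<circ> q"] eq
    show "p \<in> (\<lambda>(a, q). transpose a N \<circ> q) ` (SIGMA a:B. derangements B \<union> derangements (B - {a}))"
      by simp
  qed
qed (use transpose_comp_in_derangements_insert[OF assms] in auto)

lemma inj_on_transpose_comp: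
  assumes "N \<notin> B"
  shows "inj_on (\<lambda>(a, q). transpose a N \<circ> q) (SIGMA a:B. {q. q permutes B})"
proof (rule inj_onI, clarsimp)
  fix a q b r
  assume q: "q permutes B" and r: "r permutes B" and eq: "transpose a N \<circ> q = transpose b N \<circ> r"
  have "a = b"
    using fun_cong[OF eq, of N] permutes_not_in[OF q assms] permutes_not_in[OF r assms] by simp
  moreover have "q = r"
    using eq \<open>a = b\<close> by (metis comp_assoc swap_id_idempotent id_comp)
  ultimately show "a = b \<and> q = r" ..
qed

lemma Der_Suc_Suc: "Der (Suc (Suc k)) = Suc k * (Der (Suc k) + Der k)"
proof -
  define B where "B = {1..Suc k}"
  define D where "D a = derangements B \<union> derangements (B - {a})" for a
  have N: "Suc (Suc k) \<notin> B" and fB: "finite B" by (simp_all add: B_def)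
  have card_D: "card (D a) = Der (Suc k) + Der k" if "a \<in> B" for a
  proof -
    have "derangements B \<inter> derangements (B - {a}) = {}"
      using that by (auto simp: derangements_def dest: permutes_not_in)
    then have "card (D a) = card (derangements B) + card (derangements (B - {a}))"
      unfolding D_def using fB by (intro card_Un_disjoint finite_derangements) auto
    then show ?thesis
      using that fB by (simp add: card_derangements B_def)
  qed
  have inj: "inj_on (\<lambda>(a, q). transpose a (Suc (Suc k)) \<circ> q) (Sigma B D)"
    by (rule inj_on_subset[OF inj_on_transpose_comp[OF N]])
      (auto simp: D_def derangements_def intro: permutes_subset)
  have "Der (Suc (Suc k)) = card (derangements (insert (Suc (Suc k)) B))"
    by (simp add: card_derangements B_def)
  also have "\<dots> = card (Sigma B D)"
    unfolding derangements_insert_eq_image[OF N] D_def[symmetric] using card_image[OF inj] .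
  also have "\<dots> = (\<Sum>a\<in>B. card (D a))"
    using fB by (intro card_SigmaI) (auto simp: D_def finite_derangements)
  also have "\<dots> = Suc k * (Der (Suc k) + Der k)"
    using card_D by (simp add: B_def)
  finally show ?thesis .
qed

section \<open>Succession-free arrangements beginning with 0\<close>

definition succession_free :: "nat list \<Rightarrow> bool" where
  "succession_free xs \<longleftrightarrow> (\<forall>(a, b) \<in> adjacencies xs. b \<noteq> Suc a)"

definition sf_arrangements :: "nat \<Rightarrow> nat list set" where
  "sf_arrangements k = {xs. distinct xs \<and> set xs = {0..k} \<and> hd xs = 0 \<and> succession_free xs}"

lemma succession_free_Cons:
  "succession_free (x # xs) \<longleftrightarrow> succession_free xs \<and> (xs \<noteq> [] \<longrightarrow> hd xs \<noteq> Suc x)"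
  by (auto simp: succession_free_def adjacencies_Cons)

lemma succession_free_append:
  "succession_free (us @ vs) \<longleftrightarrow>
     succession_free us \<and> succession_free vs \<and> (us \<noteq> [] \<and> vs \<noteq> [] \<longrightarrow> hd vs \<noteq> Suc (last us))"
  by (auto simp: succession_free_def adjacencies_append)

lemma sf_arrangementsD:
  assumes "xs \<in> sf_arrangements k"
  shows "distinct xs" "set xs = {0..k}" "hd xs = 0" "succession_free xs" "xs \<noteq> []"
  using assms by (auto simp: sf_arrangements_def)

lemma finite_sf_arrangements: "finite (sf_arrangements k)"
proof -
  have "sf_arrangements k \<subseteq> {xs. set xs \<subseteq> {0..k} \<and> length xs \<le> Suc k}"
    by (auto simp: sf_arrangements_def dest: distinct_card[symmetric])
  then show ?thesis
    by (rule finite_subset) (rule finite_lists_length_le, simp)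
qed

lemma sf_arrangements_0: "sf_arrangements 0 = {[0]}"
proof
  show "sf_arrangements 0 \<subseteq> {[0]}"
  proof
    fix xs assume "xs \<in> sf_arrangements 0"
    then have d: "distinct xs" and s: "set xs = {0}" by (auto simp: sf_arrangements_def)
    then have "length xs = 1" using distinct_card[OF d] by simp
    then obtain x where "xs = [x]" by (cases xs) auto
    then show "xs \<in> {[0]}" using s by simp
  qed
qed (simp add: sf_arrangements_def succession_free_def)

lemma sf_arrangements_1: "sf_arrangements 1 = {}"
proof -
  have False if "xs \<in> sf_arrangements 1" for xs
  proof -
    have "{0..1::nat} = {0, 1}" by auto
    then have d: "distinct xs" and s: "set xs = {0, 1}" and h: "hd xs = 0" and f: "succession_free xs"
      using that by (simp_all add: sf_arrangements_def)
    then have "length xs = Suc (Suc 0)" using distinct_card[OF d] by simp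
    then obtain x y where xy: "xs = [x, y]" unfolding length_Suc_conv by auto
    then have "x = 0" using h by simp
    moreover have "y \<in> {0, 1}" "y \<noteq> x" using xy s d by auto
    ultimately have "xs = [0, 1]" using xy by blast
    then show False using f by (simp add: succession_free_def)
  qed
  then show ?thesis by blast
qed

definition shift_above :: "nat \<Rightarrow> nat \<Rightarrow> nat" where
  "shift_above a x = (if a < x then Suc x else x)"

definition unshift_above :: "nat \<Rightarrow> nat \<Rightarrow> nat" where
  "unshift_above a x = (if Suc a < x then x - 1 else x)"

lemma unshift_shift_above [simp]: "unshift_above a (shift_above a x) = x"
  by (simp add: shift_above_def unshift_above_def)

lemma shift_unshift_above: "x \<noteq> Suc a \<Longrightarrow> shift_above a (unshift_above a x) = x"
  by (auto simp: shift_above_def unshift_above_def)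

lemma bij_betw_shift_above: "a \<le> k \<Longrightarrow> bij_betw (shift_above a) {0..k} ({0..Suc k} - {Suc a})"
  by (rule bij_betw_byWitness[where f' = "unshift_above a"])
    (auto simp: shift_above_def unshift_above_def)

lemma bij_betw_unshift_above: "a \<le> k \<Longrightarrow> bij_betw (unshift_above a) ({0..Suc k} - {Suc a}) {0..k}"
  by (rule bij_betw_byWitness[where f' = "shift_above a"])
    (auto simp: shift_above_def unshift_above_def)

lemma map_shift_above_sf:
  assumes L: "L \<in> sf_arrangements k" and a: "a \<le> k"
  shows "distinct (map (shift_above a) L)"
    and "set (map (shift_above a) L) = {0..Suc k} - {Suc a}"
    and "hd (map (shift_above a) L) = 0"
    and "succession_free (map (shift_above a) L)"
    and "(a, Suc (Suc a)) \<notin> adjacencies (map (shift_above a) L)"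
proof -
  note E = sf_arrangementsD[OF L]
  note bij = bij_betw_shift_above[OF a]
  show "distinct (map (shift_above a) L)"
    using E(1,2) bij_betw_imp_inj_on[OF bij] by (simp add: distinct_map)
  show "set (map (shift_above a) L) = {0..Suc k} - {Suc a}"
    using E(2) bij_betw_imp_surj_on[OF bij] by simp
  show "hd (map (shift_above a) L) = 0"
    using E(3,5) by (simp add: hd_map shift_above_def)
  show "succession_free (map (shift_above a) L)"
    unfolding succession_free_def adjacencies_map
  proof clarsimp
    fix x y assume xy: "(x, y) \<in> adjacencies L" and succ: "shift_above a y = Suc (shift_above a x)"
    have "y \<noteq> Suc x" using E(4) xy by (auto simp: succession_free_def)
    moreover have "x \<noteq> y" using adjacent_neq[OF E(1) xy] .
    ultimately show False using succ by (auto simp: shift_above_def split: if_splits)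
  qed
  show "(a, Suc (Suc a)) \<notin> adjacencies (map (shift_above a) L)"
  proof
    assume "(a, Suc (Suc a)) \<in> adjacencies (map (shift_above a) L)"
    then obtain x z where xz: "(x, z) \<in> adjacencies L"
      "shift_above a x = a" "shift_above a z = Suc (Suc a)"
      unfolding adjacencies_map by (auto elim!: imageE)
    then have "x = a" "z = Suc a" by (auto simp: shift_above_def split: if_splits)
    then show False using E(4) xz(1) by (auto simp: succession_free_def)
  qed
qed

lemma succession_free_map_unshift_above:
  assumes "distinct P" "Suc a \<notin> set P" "succession_free P" "(a, Suc (Suc a)) \<notin> adjacencies P"
  shows "succession_free (map (unshift_above a) P)"
  unfolding succession_free_def adjacencies_map
proof clarsimp
  fix x y assume xy: "(x, y) \<in> adjacencies P"
    and succ: "unshift_above a y = Suc (unshift_above a x)"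
  have "x \<noteq> Suc a" "y \<noteq> Suc a" "x \<noteq> y"
    using in_adjacencies_setD[OF xy] assms(2) adjacent_neq[OF assms(1) xy] by auto
  moreover have "y \<noteq> Suc x"
    using assms(3) xy by (auto simp: succession_free_def)
  ultimately have "x = a \<and> y = Suc (Suc a)"
    using succ by (auto simp: unshift_above_def split: if_splits)
  then show False using assms(4) xy by simp
qed

definition insert_max :: "nat \<Rightarrow> nat \<Rightarrow> nat list \<Rightarrow> nat list" where
  "insert_max M a L = replace_elem a [a, M] L"

definition insert_max_succ :: "nat \<Rightarrow> nat \<Rightarrow> nat list \<Rightarrow> nat list" where
  "insert_max_succ M a L = replace_elem a [a, M, Suc a] (map (shift_above a) L)"

lemma insert_max_split:
  assumes L: "L \<in> sf_arrangements (Suc k)" and a: "a \<le> k"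
  obtains us vs where "L = us @ a # vs" "insert_max (Suc (Suc k)) a L = us @ a # Suc (Suc k) # vs"
    "vs = [] \<or> hd vs \<noteq> Suc a" "insert_max (Suc (Suc k)) a L \<in> sf_arrangements (Suc (Suc k))"
proof -
  define M where "M = Suc (Suc k)"
  note E = sf_arrangementsD[OF L]
  obtain us vs where uv: "L = us @ a # vs" "a \<notin> set us" "a \<notin> set vs"
    using distinct_split_elem[OF E(1), of a] E(2) a by auto
  have R: "insert_max M a L = us @ a # M # vs"
    using replace_elem_append_Cons[OF uv(2,3)] by (simp add: insert_max_def uv(1))
  have sf_L: "succession_free us" "succession_free vs"
    "us \<noteq> [] \<longrightarrow> a \<noteq> Suc (last us)" "vs \<noteq> [] \<longrightarrow> hd vs \<noteq> Suc a"
    using E(4) uv(1) by (simp_all add: succession_free_append succession_free_Cons)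
  have hd_vs: "vs \<noteq> [] \<longrightarrow> hd vs \<le> Suc k"
    using E(2) uv(1) by (auto dest: hd_in_set)
  have M_notin: "M \<notin> set L"
    using E(2) by (simp add: M_def)
  have "set (us @ a # M # vs) = insert M (set L)"
    by (auto simp: uv(1))
  then have set_eq: "set (us @ a # M # vs) = {0..M}"
    by (simp add: E(2) M_def atLeast0_atMost_Suc)
  have "succession_free (us @ a # M # vs)"
    using sf_L hd_vs a by (auto simp: succession_free_append succession_free_Cons M_def)
  moreover have "distinct (us @ a # M # vs)"
    using E(1) M_notin uv(1) by auto
  moreover have "hd (us @ a # M # vs) = 0"
    using E(3) uv(1) by (cases us) simp_all
  ultimately have "us @ a # M # vs \<in> sf_arrangements M"
    using set_eq by (simp add: sf_arrangements_def)
  then show ?thesis using that uv(1) R sf_L(4) by (auto simp: M_def)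
qed

lemma insert_max_sf_arrangements:
  assumes L: "L \<in> sf_arrangements (Suc k)" and a: "a \<le> k"
  defines "R \<equiv> insert_max (Suc (Suc k)) a L"
  shows "R \<in> sf_arrangements (Suc (Suc k))" and "(a, Suc (Suc k)) \<in> adjacencies R"
    and "(Suc (Suc k), Suc a) \<notin> adjacencies R" and "removeAll (Suc (Suc k)) R = L"
proof -
  obtain us vs where uv: "L = us @ a # vs" "R = us @ a # Suc (Suc k) # vs"
    "vs = [] \<or> hd vs \<noteq> Suc a" "R \<in> sf_arrangements (Suc (Suc k))"
    using insert_max_split[OF L a] unfolding R_def by metis
  show "R \<in> sf_arrangements (Suc (Suc k))" by fact
  have "Suc (Suc k) \<notin> set L"
    using sf_arrangementsD(2)[OF L] by simp
  then have M_notin: "Suc (Suc k) \<notin> set us" "Suc (Suc k) \<notin> set vs"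
    using uv(1) by auto
  show "(a, Suc (Suc k)) \<in> adjacencies R"
    using uv(2) by (simp add: adjacencies_append)
  show "(Suc (Suc k), Suc a) \<notin> adjacencies R"
    using uv(2,3) M_notin a
    by (auto simp: adjacencies_append adjacencies_Cons dest: in_adjacencies_setD last_in_set
        split: if_splits)
  show "removeAll (Suc (Suc k)) R = L"
    using uv(1,2) M_notin a by simp
qed

lemma insert_max_succ_split:
  assumes L: "L \<in> sf_arrangements k" and a: "a \<le> k"
  obtains us vs where "map (shift_above a) L = us @ a # vs"
    "insert_max_succ (Suc (Suc k)) a L = us @ a # Suc (Suc k) # Suc a # vs"
    "Suc a \<notin> set (us @ a # vs)" "Suc (Suc k) \<notin> set (us @ a # vs)"
    "insert_max_succ (Suc (Suc k)) a L \<in> sf_arrangements (Suc (Suc k))"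
proof -
  define M where "M = Suc (Suc k)"
  define L' where "L' = map (shift_above a) L"
  note E = map_shift_above_sf[OF L a, folded L'_def]
  obtain us vs where uv: "L' = us @ a # vs" "a \<notin> set us" "a \<notin> set vs"
    using distinct_split_elem[OF E(1), of a] E(2) a by auto
  have R: "insert_max_succ M a L = us @ a # M # Suc a # vs"
    using replace_elem_append_Cons[OF uv(2,3)] by (simp add: insert_max_succ_def uv(1) flip: L'_def)
  have sf_L': "succession_free us" "succession_free vs" "us \<noteq> [] \<longrightarrow> a \<noteq> Suc (last us)"
    using E(4) uv(1) by (simp_all add: succession_free_append succession_free_Cons)
  have hd_vs: "vs \<noteq> [] \<longrightarrow> hd vs \<noteq> Suc (Suc a)"
    using E(5) uv(1) by (auto simp: adjacencies_append adjacencies_Cons)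
  have notin: "M \<notin> set L'" "Suc a \<notin> set L'"
    using E(2) by (simp_all add: M_def)
  have set_eq: "set (us @ a # M # Suc a # vs) = {0..M}"
  proof -
    have "set (us @ a # M # Suc a # vs) = insert M (insert (Suc a) (set L'))"
      by (auto simp: uv(1))
    also have "\<dots> = insert M (insert (Suc a) ({0..Suc k} - {Suc a}))"
      by (simp only: E(2))
    also have "\<dots> = {0..M}"
      using a by (auto simp: M_def set_eq_iff)
    finally show ?thesis .
  qed
  have "succession_free (us @ a # M # Suc a # vs)"
    using sf_L' hd_vs a by (simp add: succession_free_append succession_free_Cons M_def)
  moreover have "distinct (us @ a # M # Suc a # vs)"
    using E(1) notin uv(1) a by (auto simp: M_def)
  moreover have "hd (us @ a # M # Suc a # vs) = 0"
    using E(3) uv(1) by (cases us) simp_all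
  ultimately have "us @ a # M # Suc a # vs \<in> sf_arrangements M"
    using set_eq by (simp add: sf_arrangements_def)
  then show ?thesis using that uv(1) R notin by (auto simp: M_def L'_def)
qed

lemma insert_max_succ_sf_arrangements:
  assumes L: "L \<in> sf_arrangements k" and a: "a \<le> k"
  defines "R \<equiv> insert_max_succ (Suc (Suc k)) a L"
  shows "R \<in> sf_arrangements (Suc (Suc k))" and "(a, Suc (Suc k)) \<in> adjacencies R"
    and "(Suc (Suc k), Suc a) \<in> adjacencies R"
    and "map (unshift_above a) (removeAll (Suc a) (removeAll (Suc (Suc k)) R)) = L"
proof -
  obtain us vs where uv: "map (shift_above a) L = us @ a # vs" "R = us @ a # Suc (Suc k) # Suc a # vs"
    "Suc a \<notin> set (us @ a # vs)" "Suc (Suc k) \<notin> set (us @ a # vs)"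
    "R \<in> sf_arrangements (Suc (Suc k))"
    using insert_max_succ_split[OF L a] unfolding R_def by metis
  show "R \<in> sf_arrangements (Suc (Suc k))" by fact
  show "(a, Suc (Suc k)) \<in> adjacencies R" "(Suc (Suc k), Suc a) \<in> adjacencies R"
    using uv(2) by (simp_all add: adjacencies_append)
  have "removeAll (Suc a) (removeAll (Suc (Suc k)) R) = map (shift_above a) L"
    using uv(1-4) by simp
  then show "map (unshift_above a) (removeAll (Suc a) (removeAll (Suc (Suc k)) R)) = L"
    by (simp add: map_idI)
qed

lemma delete_max_sf_arrangements:
  assumes L: "us @ a # Suc (Suc k) # vs \<in> sf_arrangements (Suc (Suc k))"
    and vs: "vs = [] \<or> hd vs \<noteq> Suc a"
  shows "us @ a # vs \<in> sf_arrangements (Suc k)"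
proof -
  note E = sf_arrangementsD[OF L]
  have "distinct (us @ a # vs)" using E(1) by auto
  moreover have "set (us @ a # vs) = {0..Suc k}"
  proof -
    have "set (us @ a # vs) = set (us @ a # Suc (Suc k) # vs) - {Suc (Suc k)}"
      using E(1) by auto
    also have "\<dots> = {0..Suc k}"
      unfolding E(2) by (simp add: atLeast0_atMost_Suc[of "Suc k"])
    finally show ?thesis .
  qed
  moreover have "hd (us @ a # vs) = 0"
    using E(3) by (cases us) simp_all
  moreover have "succession_free (us @ a # vs)"
    using E(4) vs by (auto simp: succession_free_append succession_free_Cons)
  ultimately show ?thesis by (simp add: sf_arrangements_def)
qed

lemma delete_max_succ_sf_arrangements:
  assumes L: "us @ a # Suc (Suc k) # Suc a # ws \<in> sf_arrangements (Suc (Suc k))"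
  shows "a \<le> k" and "map (unshift_above a) (us @ a # ws) \<in> sf_arrangements k"
proof -
  define M where "M = Suc (Suc k)"
  define P where "P = us @ a # ws"
  note E = sf_arrangementsD[OF L, folded M_def]
  have P_notin: "Suc a \<notin> set P" "M \<notin> set P" and "distinct P"
    using E(1) by (auto simp: P_def)
  have "Suc a \<in> {0..M}" "Suc a \<noteq> M"
    using E(1,2) by (auto simp flip: E(2))
  then show a: "a \<le> k" by (simp add: M_def)
  have "set P = set (us @ a # M # Suc a # ws) - {M, Suc a}"
    using P_notin by (auto simp: P_def)
  also have "\<dots> = {0..Suc k} - {Suc a}"
    unfolding E(2) by (auto simp: M_def set_eq_iff)
  finally have set_P: "set P = {0..Suc k} - {Suc a}" .
  note bij = bij_betw_unshift_above[OF a]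
  have "succession_free P"
    using E(4) P_notin(1) by (cases ws) (auto simp: P_def succession_free_append succession_free_Cons)
  moreover have "(a, Suc (Suc a)) \<notin> adjacencies P"
    using E(1,4) by (cases ws)
      (auto simp: P_def adjacencies_append succession_free_append succession_free_Cons
        dest: in_adjacencies_setD)
  ultimately have "succession_free (map (unshift_above a) P)"
    using succession_free_map_unshift_above \<open>distinct P\<close> P_notin(1) by blast
  moreover have "distinct (map (unshift_above a) P)"
    using \<open>distinct P\<close> set_P bij_betw_imp_inj_on[OF bij] by (simp add: distinct_map)
  moreover have "set (map (unshift_above a) P) = {0..k}"
    using set_P bij_betw_imp_surj_on[OF bij] by simp
  moreover have "hd (map (unshift_above a) P) = 0"
    using E(3) by (cases us) (simp_all add: P_def unshift_above_def)
  ultimately show "map (unshift_above a) P \<in> sf_arrangements k"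
    by (simp add: sf_arrangements_def)
qed

lemma sf_arrangements_Suc_Suc_cases:
  assumes L: "L \<in> sf_arrangements (Suc (Suc k))"
  obtains (max) a L0 where "a \<le> k" "L0 \<in> sf_arrangements (Suc k)" "L = insert_max (Suc (Suc k)) a L0"
  | (max_succ) a L1 where "a \<le> k" "L1 \<in> sf_arrangements k" "L = insert_max_succ (Suc (Suc k)) a L1"
proof -
  define M where "M = Suc (Suc k)"
  note E = sf_arrangementsD[OF L, folded M_def]
  obtain us0 vs where uv0: "L = us0 @ M # vs"
    using E(2) split_list[of M L] by auto
  have "us0 \<noteq> []" using E(3) uv0 by (auto simp: M_def)
  then obtain us a where L_eq: "L = us @ a # M # vs"
    using uv0 by (metis append_Cons append_Nil append_assoc rev_exhaust)
  have a_notin: "a \<notin> set us" "a \<notin> set vs" "a \<noteq> M" using E(1) L_eq by auto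
  have "M \<noteq> Suc a" using E(4) L_eq by (simp add: succession_free_append succession_free_Cons)
  then have a: "a \<le> k" using E(2) a_notin(3) L_eq by (auto simp: M_def)
  show thesis
  proof (cases "vs = [] \<or> hd vs \<noteq> Suc a")
    case True
    have "L = insert_max M a (us @ a # vs)"
      using replace_elem_append_Cons[OF a_notin(1,2)] by (simp add: insert_max_def L_eq)
    moreover have "us @ a # vs \<in> sf_arrangements (Suc k)"
      using L True unfolding L_eq M_def by (rule delete_max_sf_arrangements)
    ultimately show thesis
      using max[OF a] by (simp add: M_def)
  next
    case False
    then obtain ws where vs: "vs = Suc a # ws" by (cases vs) auto
    define L1 where "L1 = map (unshift_above a) (us @ a # ws)"
    have L1: "L1 \<in> sf_arrangements k"
      using delete_max_succ_sf_arrangements(2) L unfolding L1_def M_def L_eq vs by blast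
    have "Suc a \<notin> set (us @ a # ws)" using E(1) L_eq vs by auto
    then have "map (shift_above a) L1 = us @ a # ws"
      by (auto simp: L1_def intro!: map_idI shift_unshift_above)
    then have "L = insert_max_succ M a L1"
      using replace_elem_append_Cons[OF a_notin(1)] a_notin(2) vs
      by (simp add: insert_max_succ_def L_eq)
    then show thesis using max_succ[OF a L1] by (simp add: M_def)
  qed
qed

lemma sf_arrangements_Suc_Suc_eq:
  "sf_arrangements (Suc (Suc k)) =
     case_prod (insert_max (Suc (Suc k))) ` ({0..k} \<times> sf_arrangements (Suc k)) \<union>
     case_prod (insert_max_succ (Suc (Suc k))) ` ({0..k} \<times> sf_arrangements k)"
  (is "?S = ?A \<union> ?B")
proof
  show "?S \<subseteq> ?A \<union> ?B"
  proof
    fix L assume "L \<in> ?S"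
    then show "L \<in> ?A \<union> ?B"
    proof (cases rule: sf_arrangements_Suc_Suc_cases)
      case (max a L0)
      then show ?thesis by (auto intro: rev_image_eqI[of "(a, L0)"])
    next
      case (max_succ a L1)
      then show ?thesis by (auto intro: rev_image_eqI[of "(a, L1)"])
    qed
  qed
qed (use insert_max_sf_arrangements(1) insert_max_succ_sf_arrangements(1) in auto)

lemma inj_on_insert_max:
  "inj_on (case_prod (insert_max (Suc (Suc k)))) ({0..k} \<times> sf_arrangements (Suc k))"
proof (rule inj_onI, clarsimp)
  fix a L b L'
  assume a: "a \<le> k" "L \<in> sf_arrangements (Suc k)" and b: "b \<le> k" "L' \<in> sf_arrangements (Suc k)"
    and eq: "insert_max (Suc (Suc k)) a L = insert_max (Suc (Suc k)) b L'"
  note A = insert_max_sf_arrangements[OF a(2,1)] and B = insert_max_sf_arrangements[OF b(2,1)]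
  have "a = b"
    using adjacent_pred_unique[OF sf_arrangementsD(1)[OF A(1)] A(2)] B(2) eq by simp
  moreover have "L = L'" by (metis A(4) B(4) eq)
  ultimately show "a = b \<and> L = L'" ..
qed

lemma inj_on_insert_max_succ:
  "inj_on (case_prod (insert_max_succ (Suc (Suc k)))) ({0..k} \<times> sf_arrangements k)"
proof (rule inj_onI, clarsimp)
  fix a L b L'
  assume a: "a \<le> k" "L \<in> sf_arrangements k" and b: "b \<le> k" "L' \<in> sf_arrangements k"
    and eq: "insert_max_succ (Suc (Suc k)) a L = insert_max_succ (Suc (Suc k)) b L'"
  note A = insert_max_succ_sf_arrangements[OF a(2,1)]
    and B = insert_max_succ_sf_arrangements[OF b(2,1)]
  have "a = b"
    using adjacent_pred_unique[OF sf_arrangementsD(1)[OF A(1)] A(2)] B(2) eq by simp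
  moreover have "L = L'" by (metis A(4) B(4) eq \<open>a = b\<close>)
  ultimately show "a = b \<and> L = L'" ..
qed

lemma insert_max_neq_insert_max_succ:
  assumes a: "a \<le> k" "L \<in> sf_arrangements (Suc k)" and b: "b \<le> k" "L' \<in> sf_arrangements k"
  shows "insert_max (Suc (Suc k)) a L \<noteq> insert_max_succ (Suc (Suc k)) b L'"
proof
  assume eq: "insert_max (Suc (Suc k)) a L = insert_max_succ (Suc (Suc k)) b L'"
  note A = insert_max_sf_arrangements[OF a(2,1)]
    and B = insert_max_succ_sf_arrangements[OF b(2,1)]
  have "a = b"
    using adjacent_pred_unique[OF sf_arrangementsD(1)[OF A(1)] A(2)] B(2) eq by simp
  then show False using A(3) B(3) eq by simp
qed

lemma card_sf_arrangements_Suc_Suc: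
  "card (sf_arrangements (Suc (Suc k))) =
     Suc k * (card (sf_arrangements (Suc k)) + card (sf_arrangements k))"
proof -
  have finite: "finite ({0..k} \<times> sf_arrangements (Suc k))" "finite ({0..k} \<times> sf_arrangements k)"
    by (simp_all add: finite_sf_arrangements)
  have disjoint:
    "case_prod (insert_max (Suc (Suc k))) ` ({0..k} \<times> sf_arrangements (Suc k)) \<inter>
     case_prod (insert_max_succ (Suc (Suc k))) ` ({0..k} \<times> sf_arrangements k) = {}"
    by (auto dest: insert_max_neq_insert_max_succ)
  have "card (sf_arrangements (Suc (Suc k))) =
          card ({0..k} \<times> sf_arrangements (Suc k)) + card ({0..k} \<times> sf_arrangements k)"
    unfolding sf_arrangements_Suc_Suc_eq
    using card_Un_disjoint[OF finite_imageI finite_imageI disjoint] finite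
      card_image[OF inj_on_insert_max] card_image[OF inj_on_insert_max_succ]
    by simp
  then show ?thesis by (simp add: card_cartesian_product algebra_simps)
qed

lemma card_sf_arrangements: "card (sf_arrangements k) = Der k"
proof (induction k rule: induct_nat_012)
  case (ge2 k)
  then show ?case by (simp add: card_sf_arrangements_Suc_Suc Der_Suc_Suc)
qed (simp_all add: sf_arrangements_0 sf_arrangements_1 Der_0 Der_1 flip: One_nat_def)

section \<open>Deleting the maximum and relabelling cyclically\<close>

definition cyclic_relabel :: "nat \<Rightarrow> nat \<Rightarrow> nat \<Rightarrow> nat" where
  "cyclic_relabel m c x = (if c \<le> x then x - c else x + m - c)"

definition cyclic_unrelabel :: "nat \<Rightarrow> nat \<Rightarrow> nat \<Rightarrow> nat" where
  "cyclic_unrelabel m c y = (if y + c \<le> m then y + c else y + c - m)"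

context
  fixes m c :: nat
  assumes c: "1 \<le> c" "c \<le> m"
begin

lemma cyclic_unrelabel_relabel: "x \<in> {1..m} \<Longrightarrow> cyclic_unrelabel m c (cyclic_relabel m c x) = x"
  using c by (auto simp: cyclic_relabel_def cyclic_unrelabel_def)

lemma cyclic_relabel_unrelabel: "y < m \<Longrightarrow> cyclic_relabel m c (cyclic_unrelabel m c y) = y"
  using c by (auto simp: cyclic_relabel_def cyclic_unrelabel_def)

lemma bij_betw_cyclic_relabel_points: "bij_betw (cyclic_relabel m c) {1..m} {0..m - 1}"
  by (rule bij_betw_byWitness[where f' = "cyclic_unrelabel m c"])
    (use c in \<open>auto simp: cyclic_relabel_def cyclic_unrelabel_def\<close>)

lemma bij_betw_cyclic_unrelabel_points: "bij_betw (cyclic_unrelabel m c) {0..m - 1} {1..m}"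
  by (rule bij_betw_byWitness[where f' = "cyclic_relabel m c"])
    (use c in \<open>auto simp: cyclic_relabel_def cyclic_unrelabel_def\<close>)

lemma cyclic_unrelabel_succ_iff:
  assumes "y1 < m" "y2 < m"
  shows "(cyclic_unrelabel m c y2 = Suc (cyclic_unrelabel m c y1) \<or>
            cyclic_unrelabel m c y1 = m \<and> cyclic_unrelabel m c y2 = 1) \<longleftrightarrow>
         (y2 = Suc y1 \<or> y1 = m - 1 \<and> y2 = 0)"
  using assms c by (auto simp: cyclic_unrelabel_def)

end

definition cyclic_sf_arrangements :: "nat \<Rightarrow> nat \<Rightarrow> nat list set" where
  "cyclic_sf_arrangements m c =
     {zs. distinct zs \<and> set zs = {1..m} \<and> hd zs = c \<and>
          (\<forall>(u, v) \<in> adjacencies zs. v \<noteq> Suc u \<and> (u = m \<longrightarrow> v \<noteq> 1))}"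

lemma map_cyclic_relabel_in_sf_arrangements:
  assumes c: "1 \<le> c" "c \<le> m" and zs: "zs \<in> cyclic_sf_arrangements m c"
  shows "map (cyclic_relabel m c) zs \<in> sf_arrangements (m - 1)"
proof -
  have d: "distinct zs" "set zs = {1..m}" "hd zs = c"
    and no_succ: "\<And>u v. (u, v) \<in> adjacencies zs \<Longrightarrow> v \<noteq> Suc u \<and> (u = m \<longrightarrow> v \<noteq> 1)"
    using zs by (auto simp: cyclic_sf_arrangements_def)
  note bij = bij_betw_cyclic_relabel_points[OF c]
  have "distinct (map (cyclic_relabel m c) zs)"
    using d(1,2) bij_betw_imp_inj_on[OF bij] by (simp add: distinct_map)
  moreover have "set (map (cyclic_relabel m c) zs) = {0..m - 1}"
    using d(2) bij_betw_imp_surj_on[OF bij] by simp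
  moreover have "hd (map (cyclic_relabel m c) zs) = 0"
    using d c by (cases zs) (auto simp: cyclic_relabel_def)
  moreover have "succession_free (map (cyclic_relabel m c) zs)"
    unfolding succession_free_def adjacencies_map
  proof clarsimp
    fix u v assume uv: "(u, v) \<in> adjacencies zs"
      and succ: "cyclic_relabel m c v = Suc (cyclic_relabel m c u)"
    have u: "u \<in> {1..m}" and v: "v \<in> {1..m}"
      using in_adjacencies_setD[OF uv] d(2) by auto
    then have r: "cyclic_relabel m c u < m" "cyclic_relabel m c v < m"
      using bij_betw_apply[OF bij u] bij_betw_apply[OF bij v] c by auto
    have "v = Suc u \<or> u = m \<and> v = 1"
      using cyclic_unrelabel_succ_iff[OF c r] succ
      unfolding cyclic_unrelabel_relabel[OF c u] cyclic_unrelabel_relabel[OF c v] by simp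
    then show False using no_succ[OF uv] by blast
  qed
  ultimately show ?thesis by (simp add: sf_arrangements_def)
qed

lemma map_cyclic_unrelabel_in_cyclic_sf_arrangements:
  assumes c: "1 \<le> c" "c \<le> m" and w: "w \<in> sf_arrangements (m - 1)"
  shows "map (cyclic_unrelabel m c) w \<in> cyclic_sf_arrangements m c"
proof -
  note E = sf_arrangementsD[OF w]
  note bij = bij_betw_cyclic_unrelabel_points[OF c]
  have "distinct (map (cyclic_unrelabel m c) w)"
    using E(1,2) bij_betw_imp_inj_on[OF bij] by (simp add: distinct_map)
  moreover have "set (map (cyclic_unrelabel m c) w) = {1..m}"
    using E(2) bij_betw_imp_surj_on[OF bij] by simp
  moreover have "hd (map (cyclic_unrelabel m c) w) = c"
    using E(3,5) c by (simp add: hd_map cyclic_unrelabel_def)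
  moreover have "v \<noteq> Suc u \<and> (u = m \<longrightarrow> v \<noteq> 1)"
    if "(u, v) \<in> adjacencies (map (cyclic_unrelabel m c) w)" for u v
  proof -
    from that obtain y1 y2 where y: "(y1, y2) \<in> adjacencies w"
      "u = cyclic_unrelabel m c y1" "v = cyclic_unrelabel m c y2"
      unfolding adjacencies_map by (auto elim!: imageE)
    have "y2 \<noteq> Suc y1" using E(4) y(1) by (auto simp: succession_free_def)
    \<comment> \<open>\<open>0\<close> heads \<open>w\<close>, so the wrap-around pair \<open>(m - 1, 0)\<close>, which becomes \<open>(m, 1)\<close>, is absent\<close>
    moreover have "y2 \<noteq> 0" using adjacent_neq_hd[OF E(1) y(1)] E(3) by simp
    moreover have "y1 < m" "y2 < m" using in_adjacencies_setD[OF y(1)] E(2) c by auto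
    ultimately show ?thesis
      using cyclic_unrelabel_succ_iff[OF c, of y1 y2] y(2,3) by auto
  qed
  ultimately show ?thesis by (auto simp: cyclic_sf_arrangements_def)
qed

lemma bij_betw_map_cyclic_relabel:
  assumes c: "1 \<le> c" "c \<le> m"
  shows "bij_betw (map (cyclic_relabel m c)) (cyclic_sf_arrangements m c) (sf_arrangements (m - 1))"
proof (rule bij_betw_byWitness[where f' = "map (cyclic_unrelabel m c)"])
  show "\<forall>zs\<in>cyclic_sf_arrangements m c. map (cyclic_unrelabel m c) (map (cyclic_relabel m c) zs) = zs"
    using cyclic_unrelabel_relabel[OF c] by (auto simp: cyclic_sf_arrangements_def intro!: map_idI)
  show "\<forall>w\<in>sf_arrangements (m - 1). map (cyclic_relabel m c) (map (cyclic_unrelabel m c) w) = w"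
    using cyclic_relabel_unrelabel[OF c] c by (auto simp: sf_arrangements_def intro!: map_idI)
qed (use map_cyclic_relabel_in_sf_arrangements[OF c]
       map_cyclic_unrelabel_in_cyclic_sf_arrangements[OF c] in auto)

lemma in_d_n1_iff:
  "xs \<in> d_n1 n \<longleftrightarrow> distinct xs \<and> set xs = {1..n} \<and>
     (\<forall>k\<in>{1..<n}. (k, Suc k) \<notin> adjacencies xs) \<and> (n, 1) \<in> adjacencies xs"
  by (simp add: d_n1_def linear_arrangement_def contains_pattern_iff_adjacencies)

lemma d_n1_delete_max:
  assumes xs: "xs \<in> d_n1 (Suc m)"
  defines "zs \<equiv> removeAll (Suc m) xs"
  shows "zs \<in> cyclic_sf_arrangements m (if hd xs = Suc m then 1 else hd xs)"
    and "replace_elem 1 [Suc m, 1] zs = xs"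
proof -
  have d: "distinct xs" "set xs = {1..Suc m}"
    and no_succ: "\<And>k. k \<in> {1..<Suc m} \<Longrightarrow> (k, Suc k) \<notin> adjacencies xs"
    and n1: "(Suc m, 1) \<in> adjacencies xs"
    using xs by (auto simp: in_d_n1_iff)
  obtain us vs where xs_eq: "xs = us @ Suc m # 1 # vs"
    using in_adjacencies_split[OF n1] by blast
  have notin: "Suc m \<notin> set us" "Suc m \<notin> set vs" "1 \<notin> set us" "1 \<notin> set vs" "Suc m \<noteq> 1"
    using d(1) xs_eq by auto
  have zs_eq: "zs = us @ 1 # vs"
    using notin by (simp add: zs_def xs_eq)
  show "replace_elem 1 [Suc m, 1] zs = xs"
    using replace_elem_append_Cons[OF notin(3,4)] by (simp add: zs_eq xs_eq)
  have set_zs: "set zs = {1..m}"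
    using d(2) by (simp add: zs_def atLeastAtMostSuc_conv)
  have "distinct zs"
    using d(1) by (simp add: zs_def distinct_removeAll)
  moreover have "hd zs = (if hd xs = Suc m then 1 else hd xs)"
    using notin(1) by (cases us) (simp_all add: zs_eq xs_eq)
  moreover have "v \<noteq> Suc u \<and> (u = m \<longrightarrow> v \<noteq> 1)" if uv: "(u, v) \<in> adjacencies zs" for u v
  proof -
    have u: "u \<in> {1..m}" using in_adjacencies_setD[OF uv] set_zs by auto
    from adjacencies_delete_infix[of u v us "1 # vs" "[Suc m]"] uv
    consider "(u, v) \<in> adjacencies xs" | "us \<noteq> []" "u = last us" "v = 1"
      by (auto simp: zs_eq xs_eq)
    then show ?thesis
    proof cases
      case 1
      then show ?thesis
        using u no_succ[of u] adjacent_pred_unique[OF d(1) n1, of u] by auto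
    next
      case 2
      then have "(u, Suc m) \<in> adjacencies xs"
        by (simp add: xs_eq adjacencies_append)
      then show ?thesis using 2 u no_succ[of m] by auto
    qed
  qed
  ultimately show "zs \<in> cyclic_sf_arrangements m (if hd xs = Suc m then 1 else hd xs)"
    using set_zs by (auto simp: cyclic_sf_arrangements_def)
qed

lemma cyclic_sf_arrangements_insert_max:
  assumes zs: "zs \<in> cyclic_sf_arrangements m c" and m: "1 \<le> m"
  defines "xs \<equiv> replace_elem 1 [Suc m, 1] zs"
  shows "xs \<in> d_n1 (Suc m)" and "hd xs = (if c = 1 then Suc m else c)"
    and "removeAll (Suc m) xs = zs"
proof -
  have d: "distinct zs" "set zs = {1..m}" "hd zs = c"
    and no_succ: "\<And>u v. (u, v) \<in> adjacencies zs \<Longrightarrow> v \<noteq> Suc u \<and> (u = m \<longrightarrow> v \<noteq> 1)"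
    using zs by (auto simp: cyclic_sf_arrangements_def)
  obtain us vs where zs_eq: "zs = us @ 1 # vs" "1 \<notin> set us" "1 \<notin> set vs"
    using distinct_split_elem[OF d(1), of 1] d(2) m by auto
  have xs_eq: "xs = us @ Suc m # 1 # vs"
    using replace_elem_append_Cons[OF zs_eq(2,3)] by (simp add: xs_def zs_eq(1))
  have n_notin: "Suc m \<notin> set zs" using d(2) by auto
  show "removeAll (Suc m) xs = zs"
    using n_notin by (simp add: xs_eq zs_eq(1))
  show "hd xs = (if c = 1 then Suc m else c)"
    using d(3) zs_eq by (cases us) (auto simp: xs_eq)
  have "set xs = insert (Suc m) (set zs)"
    by (auto simp: xs_eq zs_eq(1))
  then have set_xs: "set xs = {1..Suc m}"
    by (simp add: d(2) atLeastAtMostSuc_conv)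
  have "distinct xs"
    using d(1) n_notin by (simp add: xs_eq zs_eq(1))
  moreover have "(Suc m, 1) \<in> adjacencies xs"
    by (simp add: xs_eq adjacencies_append)
  moreover have "(k, Suc k) \<notin> adjacencies xs" if k: "k \<in> {1..<Suc m}" for k
  proof
    assume "(k, Suc k) \<in> adjacencies xs"
    with adjacencies_insert_infix[of k "Suc k" us "[Suc m]" "1 # vs"]
    consider "(k, Suc k) \<in> adjacencies zs" | "us \<noteq> []" "k = last us" "k = m"
      using k by (auto simp: xs_eq zs_eq(1))
    then show False
    proof cases
      case 1
      then show False using no_succ by blast
    next
      case 2
      then have "(m, 1) \<in> adjacencies zs"
        by (simp add: zs_eq(1) adjacencies_append)
      then show False using no_succ by blast
    qed
  qed
  ultimately show "xs \<in> d_n1 (Suc m)"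
    using set_xs by (simp add: in_d_n1_iff)
qed

lemma bij_betw_d_n1_cyclic_sf_arrangements:
  assumes "1 \<le> m" "i \<in> {2..Suc m}"
  shows "bij_betw (removeAll (Suc m)) {xs \<in> d_n1 (Suc m). hd xs = i}
           (cyclic_sf_arrangements m (if i = Suc m then 1 else i))"
proof (rule bij_betw_byWitness[where f' = "replace_elem 1 [Suc m, 1]"])
  let ?c = "if i = Suc m then 1 else i"
  show "\<forall>xs\<in>{xs \<in> d_n1 (Suc m). hd xs = i}.
          replace_elem 1 [Suc m, 1] (removeAll (Suc m) xs) = xs"
    using d_n1_delete_max(2) by blast
  show "\<forall>zs\<in>cyclic_sf_arrangements m ?c.
          removeAll (Suc m) (replace_elem 1 [Suc m, 1] zs) = zs"
    using cyclic_sf_arrangements_insert_max(3)[OF _ assms(1)] by blast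
  show "removeAll (Suc m) ` {xs \<in> d_n1 (Suc m). hd xs = i} \<subseteq> cyclic_sf_arrangements m ?c"
  proof
    fix zs assume "zs \<in> removeAll (Suc m) ` {xs \<in> d_n1 (Suc m). hd xs = i}"
    then obtain xs where "xs \<in> d_n1 (Suc m)" "hd xs = i" "zs = removeAll (Suc m) xs"
      by blast
    then show "zs \<in> cyclic_sf_arrangements m ?c"
      using d_n1_delete_max(1)[of xs m] by (simp only:)
  qed
  show "replace_elem 1 [Suc m, 1] ` cyclic_sf_arrangements m ?c \<subseteq> {xs \<in> d_n1 (Suc m). hd xs = i}"
  proof clarify
    fix zs assume "zs \<in> cyclic_sf_arrangements m ?c"
    then show "replace_elem 1 [Suc m, 1] zs \<in> d_n1 (Suc m) \<and> hd (replace_elem 1 [Suc m, 1] zs) = i"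
      using cyclic_sf_arrangements_insert_max(1,2)[of zs m ?c] assms by auto
  qed
qed

theorem lemma4p8:
  fixes n i :: nat
  assumes "n \<ge> 2" and "i \<in> {1..n}"
    and "{xs \<in> d_n1 n. hd xs = i} \<noteq> {}"
  shows "card {xs \<in> d_n1 n. hd xs = i} = Der (n - 2)"
proof -
  define m where "m = n - 1"
  define c where "c = (if i = n then 1 else i)"
  obtain xs where "xs \<in> d_n1 n" "hd xs = i"
    using assms(3) by auto
  then have "i \<noteq> 1"
    using adjacent_neq_hd[of xs n 1] by (auto simp: in_d_n1_iff)
  then have m: "1 \<le> m" "n = Suc m" and i: "i \<in> {2..Suc m}" and c: "1 \<le> c" "c \<le> m"
    using assms(1,2) by (auto simp: m_def c_def)
  have "card {xs \<in> d_n1 n. hd xs = i} = card (cyclic_sf_arrangements m c)"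
    using bij_betw_same_card[OF bij_betw_d_n1_cyclic_sf_arrangements[OF m(1) i]]
    by (simp add: m(2) c_def)
  also have "\<dots> = card (sf_arrangements (m - 1))"
    using bij_betw_same_card[OF bij_betw_map_cyclic_relabel[OF c]] .
  also have "\<dots> = Der (m - 1)"
    by (rule card_sf_arrangements)
  also have "m - 1 = n - 2"
    unfolding m_def by arith
  finally show ?thesis .
qed

end
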